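(* Let $d,n\in\mathbb N$ with $n\ge 2$, $Q,K\in\mathbb R^{d\times d}$, $V:=I_d$, and $A:=K^\top Q/\sqrt d$. Assume $A$ has at least one real eigenvalue, and let $\gamma_1\ge\dots\ge\gamma_\delta$ be the real eigenvalues of $A$. Set $\gamma:=\max(-\gamma_\delta,\gamma_1/8)$. Then for every $R>0$, the self-attention map $f$ with parameters $(A,V)$ satisfies $$\mathrm{Lip}\big(f_{|B_R^n}\big)\ge\frac{\sqrt{n-1}}{1+(n-1)e^{-2R^2\gamma}}.$$
   Context: For $X=(x_1,\dots,x_n)\in(\mathbb R^d)^n$, self-attention with parameters $(A,V)$ is $f(X)=\big(V\sum_{j=1}^nP_{ij}x_j\big)_{1\le i\le n}$, where $P_{ij}=\exp(x_i^\top A^\top x_j)/\sum_{l=1}^n\exp(x_i^\top A^\top x_l)$. $(\mathbb R^d)^n$ carries the Frobenius norm $\|X\|_F=(\sum_i|x_i|^2)^{1/2}$. $B_R\subset\mathbb R^d$ is the closed Euclidean ball of center $0$ and radius $R$, and $\mathrm{Lip}(f_{|\mathcal X})=\sup_{X\ne Y\in\mathcal X}\|f(X)-f(Y)\|_F/\|X-Y\|_F$. *)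

theory Defs
  imports "HOL-Analysis.Analysis"
begin

text \<open>Token sequences X = (x_1,...,x_n) are functions from a finite index type 'n
  to R^d (= real^'d). Parameters A and V are d x d matrices.\<close>

definition attn_P :: "real^'d^'d \<Rightarrow> ('n::finite \<Rightarrow> real^'d) \<Rightarrow> 'n \<Rightarrow> 'n \<Rightarrow> real" where
  "attn_P A X i j =
     exp (X i \<bullet> (transpose A *v X j)) / (\<Sum>l\<in>UNIV. exp (X i \<bullet> (transpose A *v X l)))"

definition self_attention ::
  "real^'d^'d \<Rightarrow> real^'d^'d \<Rightarrow> ('n::finite \<Rightarrow> real^'d) \<Rightarrow> ('n \<Rightarrow> real^'d)" where
  "self_attention A V X = (\<lambda>i. V *v (\<Sum>j\<in>UNIV. attn_P A X i j *\<^sub>R X j))"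

definition frob_norm :: "('n::finite \<Rightarrow> real^'d) \<Rightarrow> real" where
  "frob_norm X = sqrt (\<Sum>i\<in>UNIV. (norm (X i))\<^sup>2)"

definition lip_on ::
  "('n::finite \<Rightarrow> real^'d) set \<Rightarrow> (('n \<Rightarrow> real^'d) \<Rightarrow> ('n \<Rightarrow> real^'d)) \<Rightarrow> ereal" where
  "lip_on S f = (SUP XY \<in> {(X,Y). X \<in> S \<and> Y \<in> S \<and> X \<noteq> Y}.
       ereal (frob_norm (f (fst XY) - f (snd XY)) / frob_norm (fst XY - snd XY)))"

definition ball_tokens :: "real \<Rightarrow> ('n::finite \<Rightarrow> real^'d) set" where
  "ball_tokens R = {X. \<forall>i. X i \<in> cball 0 R}"

definition real_eigenvalues :: "real^'d^'d \<Rightarrow> real set" where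
  "real_eigenvalues A = {c. \<exists>v. v \<noteq> 0 \<and> A *v v = c *\<^sub>R v}"

end

theory Submission
  imports Defs
begin

text \<open>Place all tokens on the line through a unit eigenvector u of A for the eigenvalue lam:
  one token at s u and the remaining n - 1 tokens at q u.  The n - 1 output rows of the
  tokens at q u are then all equal to the same softmax average G(s) u, so the Lipschitz quotient of the pair
  of configurations with positions s and p is at least sqrt (n - 1) times the secant slope of G,
  which in turn is at least the softmax weight of the moving token when lam q (p - q) \<ge> 0.
  Letting s tend to p gives the bound sqrt (n - 1) / (1 + (n - 1) exp (- lam q (p - q))); the
  choices (lam, p, q) = (min eigenvalue, -R, R) and (max eigenvalue, R, R/2) make the exponent
  2 R^2 \<gamma>.\<close>

lemma eigenvector_combination_zero:
  fixes f :: "'a::real_vector \<Rightarrow> 'a" and v :: "real \<Rightarrow> 'a"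
  assumes f: "linear f" and S: "finite S"
    and eig: "\<And>c. c \<in> S \<Longrightarrow> f (v c) = c *\<^sub>R v c \<and> v c \<noteq> 0"
    and zero: "(\<Sum>c\<in>S. k c *\<^sub>R v c) = 0" and c: "c \<in> S"
  shows "k c = 0"
  using S eig zero c
proof (induction S arbitrary: k c rule: finite_induct)
  case empty
  then show ?case by simp
next
  case (insert a S)
  have sum_a: "k a *\<^sub>R v a + (\<Sum>c\<in>S. k c *\<^sub>R v c) = 0"
    using insert.hyps insert.prems(2) by simp
  have "f (k a *\<^sub>R v a + (\<Sum>c\<in>S. k c *\<^sub>R v c)) = 0"
    using sum_a linear_0[OF f] by simp
  then have image: "(k a * a) *\<^sub>R v a + (\<Sum>c\<in>S. (k c * c) *\<^sub>R v c) = 0"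
    using insert.prems(1) by (simp add: linear_add[OF f] linear_sum[OF f] linear_scale[OF f])
  have "(\<Sum>c\<in>S. (k c * (c - a)) *\<^sub>R v c)
      = (\<Sum>c\<in>S. (k c * c) *\<^sub>R v c) - a *\<^sub>R (\<Sum>c\<in>S. k c *\<^sub>R v c)"
    by (simp add: algebra_simps scaleR_sum_right sum_subtractf)
  also have "\<dots> = 0"
  proof -
    have "(\<Sum>c\<in>S. (k c * c) *\<^sub>R v c) = - ((k a * a) *\<^sub>R v a)"
      using image by (simp add: eq_neg_iff_add_eq_0 add.commute)
    moreover have "(\<Sum>c\<in>S. k c *\<^sub>R v c) = - (k a *\<^sub>R v a)"
      using sum_a by (simp add: eq_neg_iff_add_eq_0 add.commute)
    ultimately show ?thesis
      by (simp add: algebra_simps)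
  qed
  finally have "(\<Sum>c\<in>S. (k c * (c - a)) *\<^sub>R v c) = 0" .
  then have kS: "k c = 0" if "c \<in> S" for c
    using insert.IH[of "\<lambda>c. k c * (c - a)" c] insert.prems(1) insert.hyps(2) that by auto
  then have "k a *\<^sub>R v a = 0"
    using sum_a by simp
  then have "k a = 0"
    using insert.prems(1) by simp
  with kS insert.prems(3) show ?case by auto
qed
lemma finite_eigenvalues:
  fixes f :: "'a::euclidean_space \<Rightarrow> 'a"
  assumes f: "linear f"
  shows "finite {c. \<exists>v. v \<noteq> 0 \<and> f v = c *\<^sub>R v}" (is "finite ?E")
proof (rule ccontr)
  assume "infinite ?E"
  then obtain S where S: "S \<subseteq> ?E" "finite S" "card S = Suc DIM('a)"
    using infinite_arbitrarily_large by blast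
  define v where "v c = (SOME w. w \<noteq> 0 \<and> f w = c *\<^sub>R w)" for c
  have eig: "f (v c) = c *\<^sub>R v c \<and> v c \<noteq> 0" if "c \<in> S" for c
    using someI_ex[of "\<lambda>w. w \<noteq> 0 \<and> f w = c *\<^sub>R w"] that S(1) unfolding v_def by auto
  have inj: "inj_on v S"
  proof (rule inj_onI)
    fix x y assume "x \<in> S" "y \<in> S" "v x = v y"
    then have "x *\<^sub>R v x = y *\<^sub>R v x" and "v x \<noteq> 0"
      using eig by metis+
    then show "x = y" by simp
  qed
  have "independent (v ` S)"
  proof (rule independent_if_scalars_zero)
    fix k x assume k: "(\<Sum>x\<in>v ` S. k x *\<^sub>R x) = 0" and x: "x \<in> v ` S"
    have "(\<Sum>c\<in>S. k (v c) *\<^sub>R v c) = 0"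
      using k by (simp add: sum.reindex[OF inj])
    moreover obtain c where "c \<in> S" "x = v c"
      using x by blast
    ultimately show "k x = 0"
      using eigenvector_combination_zero[OF f S(2) eig, of "\<lambda>c. k (v c)" c] by simp
  qed (use S(2) in simp)
  then have "card (v ` S) \<le> DIM('a)"
    by (rule independent_bound[THEN conjunct2])
  with S(3) show False
    by (simp add: card_image[OF inj])
qed

lemma finite_real_eigenvalues: "finite (real_eigenvalues A)"
  unfolding real_eigenvalues_def by (rule finite_eigenvalues[OF matrix_vector_mul_linear])

lemma unit_eigenvector:
  fixes A :: "real^'d^'d"
  assumes "lam \<in> real_eigenvalues A"
  obtains u where "A *v u = lam *\<^sub>R u" "norm u = 1"
proof -
  obtain v where v: "v \<noteq> 0" "A *v v = lam *\<^sub>R v"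
    using assms unfolding real_eigenvalues_def by blast
  show thesis
  proof
    show "A *v (v /\<^sub>R norm v) = lam *\<^sub>R (v /\<^sub>R norm v)"
      by (simp add: matrix_vector_mult_scaleR v(2))
    show "norm (v /\<^sub>R norm v) = 1"
      using v(1) by simp
  qed
qed

lemma self_attention_on_eigenline:
  fixes A :: "real^'d^'d" and c :: "'n::finite \<Rightarrow> real"
  assumes eu: "A *v u = lam *\<^sub>R u" and nu: "norm u = 1"
  shows "self_attention A (mat 1) (\<lambda>j. c j *\<^sub>R u) i =
    ((\<Sum>j\<in>UNIV. exp (lam * c i * c j) * c j) / (\<Sum>j\<in>UNIV. exp (lam * c i * c j))) *\<^sub>R u"
proof -
  have score: "(c i *\<^sub>R u) \<bullet> (transpose A *v (c j *\<^sub>R u)) = lam * c i * c j" for j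
  proof -
    have "(c i *\<^sub>R u) \<bullet> (transpose A *v (c j *\<^sub>R u)) = (A *v (c i *\<^sub>R u)) \<bullet> (c j *\<^sub>R u)"
      by (metis dot_lmul_matrix vector_transpose_matrix)
    also have "\<dots> = lam * c i * c j * (u \<bullet> u)"
      by (simp add: matrix_vector_mult_scaleR eu)
    finally show ?thesis
      using nu by (simp add: norm_eq_1)
  qed
  show ?thesis
    unfolding self_attention_def attn_P_def matrix_vector_mul_lid score
    by (simp add: scaleR_sum_left sum_divide_distrib)
qed

lemma sum_UNIV_single_index:
  fixes g :: "real \<Rightarrow> real" and i0 :: "'n::finite"
  shows "(\<Sum>j\<in>UNIV. g (if j = i0 then s else q)) = g s + (real CARD('n) - 1) * g q"
proof -
  have "(\<Sum>j\<in>UNIV. g (if j = i0 then s else q)) = g s + (\<Sum>j\<in>UNIV - {i0}. g q)"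
    by (simp add: sum.remove[of UNIV i0])
  moreover have "real (card (UNIV - {i0} :: 'n set)) = real CARD('n) - 1"
    by (simp add: card_Diff_subset of_nat_diff Suc_le_eq)
  ultimately show ?thesis
    by simp
qed

text \<open>One token at position x against a total softmax mass K concentrated at position q, with
  score slope m: the attention weight of the token and the resulting attention average.\<close>

definition attention_weight :: "real \<Rightarrow> real \<Rightarrow> real \<Rightarrow> real" where
  "attention_weight m K x = exp (m * x) / (exp (m * x) + K)"

definition attention_mean :: "real \<Rightarrow> real \<Rightarrow> real \<Rightarrow> real \<Rightarrow> real" where
  "attention_mean m K q x = (exp (m * x) * x + K * q) / (exp (m * x) + K)"

lemma attention_mean_eq:
  assumes "K \<ge> 0"
  shows "attention_mean m K q x = q + (x - q) * attention_weight m K x"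
  using assms add_pos_nonneg[OF exp_gt_zero assms, of "m * x"]
  by (simp add: attention_mean_def attention_weight_def field_simps)

lemma self_attention_two_level:
  fixes A :: "real^'d^'d" and i0 i :: "'n::finite"
  assumes "A *v u = lam *\<^sub>R u" "norm u = 1" "i \<noteq> i0"
  shows "self_attention A (mat 1) (\<lambda>j. (if j = i0 then s else q) *\<^sub>R u) i =
    attention_mean (lam * q) ((real CARD('n) - 1) * exp (lam * q * q)) q s *\<^sub>R u"
proof -
  have "self_attention A (mat 1) (\<lambda>j. (if j = i0 then s else q) *\<^sub>R u) i =
    ((\<Sum>j\<in>UNIV. exp (lam * q * (if j = i0 then s else q)) * (if j = i0 then s else q)) /
     (\<Sum>j\<in>UNIV. exp (lam * q * (if j = i0 then s else q)))) *\<^sub>R u"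
    using self_attention_on_eigenline[OF assms(1,2), of "\<lambda>j. if j = i0 then s else q" i] assms(3)
    by simp
  also have "\<dots> = attention_mean (lam * q) ((real CARD('n) - 1) * exp (lam * q * q)) q s *\<^sub>R u"
    unfolding sum_UNIV_single_index[of "\<lambda>x. exp (lam * q * x) * x"]
      sum_UNIV_single_index[of "\<lambda>x. exp (lam * q * x)"]
    by (simp add: attention_mean_def mult.assoc)
  finally show ?thesis .
qed

lemma attention_weight_monotone:
  assumes "K \<ge> 0"
  shows "(attention_weight m K s - attention_weight m K p) * (m * (s - p)) \<ge> 0"
proof -
  have es: "exp (m * s) + K > 0" and ep: "exp (m * p) + K > 0"
    using assms add_pos_nonneg[OF exp_gt_zero assms] by auto
  have exp_monotone: "(exp (m * s) - exp (m * p)) * (m * s - m * p) \<ge> 0"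
    by (cases "m * s \<le> m * p") (auto intro: mult_nonpos_nonpos)
  define D where "D = K / ((exp (m * s) + K) * (exp (m * p) + K))"
  have "attention_weight m K s - attention_weight m K p = (exp (m * s) - exp (m * p)) * D"
    using es ep by (simp add: attention_weight_def D_def field_simps)
  then have "(attention_weight m K s - attention_weight m K p) * (m * (s - p))
      = ((exp (m * s) - exp (m * p)) * (m * s - m * p)) * D"
    by (simp only:) (simp add: algebra_simps)
  moreover have "D \<ge> 0"
    using assms es ep by (simp add: D_def)
  ultimately show ?thesis
    using exp_monotone by simp
qed

lemma attention_mean_secant_ge:
  assumes K: "K \<ge> 0" and mpq: "m * (p - q) \<ge> 0" and sp: "s \<noteq> p"
  shows "attention_weight m K s \<le> (attention_mean m K q s - attention_mean m K q p) / (s - p)"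
proof -
  define ws wp where "ws = attention_weight m K s" and "wp = attention_weight m K p"
  have cross: "(p - q) * (ws - wp) * (s - p) \<ge> 0"
  proof (cases "m = 0")
    case True
    then show ?thesis by (simp add: ws_def wp_def attention_weight_def)
  next
    case False
    have "((p - q) * (ws - wp) * (s - p)) * m\<^sup>2 = (m * (p - q)) * ((ws - wp) * (m * (s - p)))"
      by (simp add: power2_eq_square algebra_simps)
    also have "\<dots> \<ge> 0"
      using mpq attention_weight_monotone[OF K] by (simp add: ws_def wp_def)
    finally show ?thesis
      using False by (simp add: zero_le_mult_iff)
  qed
  have "attention_mean m K q s - attention_mean m K q p = (s - p) * ws + (p - q) * (ws - wp)"
    by (simp add: attention_mean_eq[OF K] ws_def wp_def algebra_simps)
  then have "(attention_mean m K q s - attention_mean m K q p) / (s - p)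
      = ws + ((p - q) * (ws - wp)) / (s - p)"
    using sp by (simp add: add_divide_distrib)
  also have "((p - q) * (ws - wp)) / (s - p) = ((p - q) * (ws - wp) * (s - p)) / (s - p)\<^sup>2"
    using sp by (simp add: power2_eq_square)
  finally have "(attention_mean m K q s - attention_mean m K q p) / (s - p)
      = ws + ((p - q) * (ws - wp) * (s - p)) / (s - p)\<^sup>2" .
  moreover have "((p - q) * (ws - wp) * (s - p)) / (s - p)\<^sup>2 \<ge> 0"
    using cross by simp
  ultimately show ?thesis
    by (simp add: ws_def)
qed

lemma frob_norm_single_row:
  fixes Y :: "'n::finite \<Rightarrow> real^'d"
  assumes "\<And>i. i \<noteq> k \<Longrightarrow> Y i = 0"
  shows "frob_norm Y = norm (Y k)"
proof -
  have "(\<Sum>i\<in>UNIV. (norm (Y i))\<^sup>2) = (\<Sum>i\<in>UNIV. if i = k then (norm (Y k))\<^sup>2 else 0)"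
    by (rule sum.cong) (auto simp: assms)
  then show ?thesis
    by (simp add: frob_norm_def)
qed

lemma frob_norm_ge_rows:
  fixes Y :: "'n::finite \<Rightarrow> real^'d"
  assumes "\<And>i. i \<in> I \<Longrightarrow> norm (Y i) = a"
  shows "sqrt (card I) * a \<le> frob_norm Y"
proof (cases "I = {}")
  case False
  then have "a \<ge> 0"
    using assms by force
  then have "sqrt (card I) * a = sqrt (\<Sum>i\<in>I. (norm (Y i))\<^sup>2)"
    using assms by (simp add: real_sqrt_mult)
  also have "\<dots> \<le> frob_norm Y"
    unfolding frob_norm_def by (intro real_sqrt_le_mono sum_mono2) auto
  finally show ?thesis .
qed (simp add: frob_norm_def sum_nonneg)

lemma lip_on_ge_quotient:
  assumes "X \<in> S" "Y \<in> S" "X \<noteq> Y"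
  shows "ereal (frob_norm (f X - f Y) / frob_norm (X - Y)) \<le> lip_on S f"
  unfolding lip_on_def
  by (rule SUP_upper2[of "(X, Y)"]) (use assms in auto)

lemma ereal_le_of_isCont_along_ray:
  fixes g :: "real \<Rightarrow> real"
  assumes "isCont g p" and "\<And>t. 0 < t \<Longrightarrow> t < 1 \<Longrightarrow> ereal (g (t * p)) \<le> L"
  shows "ereal (g p) \<le> L"
proof (rule tendsto_le[OF trivial_limit_at_left_real tendsto_const])
  have "((\<lambda>t. t * p) \<longlongrightarrow> 1 * p) (at_left 1)"
    by (intro tendsto_intros)
  then have "((\<lambda>t. g (t * p)) \<longlongrightarrow> g p) (at_left 1)"
    using isCont_tendsto_compose[OF assms(1)] by simp
  then show "((\<lambda>t. ereal (g (t * p))) \<longlongrightarrow> ereal (g p)) (at_left 1)"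
    by (rule tendsto_ereal)
  show "\<forall>\<^sub>F t in at_left 1. ereal (g (t * p)) \<le> L"
    using eventually_at_left_real[of 0 1] by (rule eventually_mono) (auto intro: assms(2))
qed

lemma lip_on_self_attention_ge_weight:
  fixes A :: "real^'d^'d" and u :: "real^'d"
  assumes eu: "A *v u = lam *\<^sub>R u" and nu: "norm u = 1"
    and sR: "\<bar>s\<bar> \<le> R" and pR: "\<bar>p\<bar> \<le> R" and qR: "\<bar>q\<bar> \<le> R" and sp: "s \<noteq> p"
    and cond: "lam * q * (p - q) \<ge> 0"
  shows "ereal (sqrt (real CARD('n) - 1) *
      attention_weight (lam * q) ((real CARD('n) - 1) * exp (lam * q * q)) s)
    \<le> lip_on (ball_tokens R :: ('n::finite \<Rightarrow> real^'d) set) (self_attention A (mat 1))"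
proof -
  define N where "N = real CARD('n) - 1"
  define K where "K = N * exp (lam * q * q)"
  define G where "G x = attention_mean (lam * q) K q x" for x
  obtain i0 :: 'n where True by blast
  define X where "X x = (\<lambda>j. (if j = i0 then x else q) *\<^sub>R u)" for x
  let ?f = "self_attention A (mat 1) :: ('n \<Rightarrow> real^'d) \<Rightarrow> _"
  have N: "N \<ge> 0" and K: "K \<ge> 0"
    by (simp_all add: N_def K_def Suc_le_eq)
  have in_ball: "X x \<in> ball_tokens R" if "\<bar>x\<bar> \<le> R" for x
    using that qR by (auto simp: ball_tokens_def X_def nu)
  have "X s i0 \<noteq> X p i0"
    using sp nu by (auto simp: X_def)
  then have "X s \<noteq> X p"
    by metis
  have input_dist: "frob_norm (X s - X p) = \<bar>s - p\<bar>"
    by (subst frob_norm_single_row[where k = i0]) (simp_all add: X_def nu flip: scaleR_diff_left)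
  have "real (card (UNIV - {i0})) = N"
    by (simp add: N_def card_Diff_subset of_nat_diff Suc_le_eq)
  then have attention_rows: "sqrt N * \<bar>G s - G p\<bar> \<le> frob_norm (?f (X s) - ?f (X p))"
    using frob_norm_ge_rows[of "UNIV - {i0}" "?f (X s) - ?f (X p)" "\<bar>G s - G p\<bar>"]
    by (simp add: X_def G_def K_def N_def self_attention_two_level[OF eu nu] nu
        flip: scaleR_diff_left)
  have "attention_weight (lam * q) K s \<le> (G s - G p) / (s - p)"
    unfolding G_def by (rule attention_mean_secant_ge[OF K _ sp]) (use cond in \<open>simp add: mult.assoc\<close>)
  also have "\<dots> \<le> \<bar>G s - G p\<bar> / \<bar>s - p\<bar>"
    by (metis abs_divide abs_ge_self)
  finally have "sqrt N * attention_weight (lam * q) K s \<le> sqrt N * (\<bar>G s - G p\<bar> / \<bar>s - p\<bar>)"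
    using N by (intro mult_left_mono) simp_all
  also have "\<dots> \<le> frob_norm (?f (X s) - ?f (X p)) / frob_norm (X s - X p)"
    unfolding input_dist using divide_right_mono[OF attention_rows, of "\<bar>s - p\<bar>"] by simp
  finally have "ereal (sqrt N * attention_weight (lam * q) K s)
      \<le> ereal (frob_norm (?f (X s) - ?f (X p)) / frob_norm (X s - X p))"
    by simp
  also have "\<dots> \<le> lip_on (ball_tokens R) ?f"
    by (rule lip_on_ge_quotient) (use in_ball sR pR \<open>X s \<noteq> X p\<close> in auto)
  finally show ?thesis
    by (simp add: N_def K_def)
qed

lemma attention_weight_eq:
  assumes "N \<ge> 0"
  shows "attention_weight m (N * exp (m * q)) p = 1 / (1 + N * exp (- (m * (p - q))))"
proof -
  have "1 + N * exp (- (m * (p - q))) = (exp (m * p) + N * exp (m * q)) / exp (m * p)"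
    by (simp add: right_diff_distrib exp_diff field_simps flip: exp_minus)
  then show ?thesis
    by (simp add: attention_weight_def)
qed

lemma lip_on_self_attention_ge:
  fixes A :: "real^'d^'d" and u :: "real^'d"
  assumes eu: "A *v u = lam *\<^sub>R u" and nu: "norm u = 1"
    and p: "p \<noteq> 0" and pR: "\<bar>p\<bar> \<le> R" and qR: "\<bar>q\<bar> \<le> R" and cond: "lam * q * (p - q) \<ge> 0"
  shows "ereal (sqrt (real CARD('n) - 1) / (1 + (real CARD('n) - 1) * exp (- (lam * q * (p - q)))))
    \<le> lip_on (ball_tokens R :: ('n::finite \<Rightarrow> real^'d) set) (self_attention A (mat 1))"
proof -
  define N where "N = real CARD('n) - 1"
  define K where "K = N * exp (lam * q * q)"
  have "N \<ge> 0" and "K \<ge> 0"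
    by (simp_all add: K_def N_def Suc_le_eq)
  have "ereal (sqrt N * attention_weight (lam * q) K p)
      \<le> lip_on (ball_tokens R :: ('n \<Rightarrow> real^'d) set) (self_attention A (mat 1))"
  proof (rule ereal_le_of_isCont_along_ray[where g = "\<lambda>s. sqrt N * attention_weight (lam * q) K s"])
    show "isCont (\<lambda>s. sqrt N * attention_weight (lam * q) K s) p"
      unfolding attention_weight_def
      using add_pos_nonneg[OF exp_gt_zero \<open>K \<ge> 0\<close>]
      by (intro continuous_intros) (metis order_less_irrefl)
    fix t :: real assume "0 < t" "t < 1"
    then have "\<bar>t * p\<bar> \<le> R" and "t * p \<noteq> p"
      using pR p by (auto simp: abs_mult intro: order_trans[OF mult_left_le_one_le])
    then show "ereal (sqrt N * attention_weight (lam * q) K (t * p))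
        \<le> lip_on (ball_tokens R :: ('n \<Rightarrow> real^'d) set) (self_attention A (mat 1))"
      unfolding N_def K_def by (rule lip_on_self_attention_ge_weight[OF eu nu _ pR qR _ cond])
  qed
  then show ?thesis
    using attention_weight_eq[OF \<open>N \<ge> 0\<close>, of "lam * q" q p] by (simp add: K_def N_def mult.assoc)
qed

theorem mainTheorem2:
  fixes Q K :: "real^'d^'d" and R :: real
  assumes n2: "CARD('n::finite) \<ge> 2"
    and A_def: "A = (1 / sqrt (real CARD('d))) *\<^sub>R (transpose K ** Q)"
    and eig: "real_eigenvalues A \<noteq> {}"
    and gam: "\<gamma> = max (- Min (real_eigenvalues A)) (Max (real_eigenvalues A) / 8)"
    and R: "R > 0"
  shows "ereal (sqrt (real CARD('n) - 1) / (1 + (real CARD('n) - 1) * exp (- 2 * R\<^sup>2 * \<gamma>)))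
           \<le> lip_on (ball_tokens R :: ('n \<Rightarrow> real^'d) set) (self_attention A (mat 1))"
proof -
  let ?E = "real_eigenvalues A"
  have Min: "Min ?E \<in> ?E" and Max: "Max ?E \<in> ?E" and "Min ?E \<le> Max ?E"
    using finite_real_eigenvalues[of A] eig by simp_all
  obtain lam p q where "lam \<in> ?E" "p \<noteq> 0" "\<bar>p\<bar> \<le> R" "\<bar>q\<bar> \<le> R"
    and exponent: "lam * q * (p - q) = 2 * R\<^sup>2 * \<gamma>"
  proof (cases "Max ?E / 8 \<le> - Min ?E")
    case True
    then show thesis
      using that[OF Min, of "- R" R] gam R by (simp add: power2_eq_square algebra_simps)
  next
    case False
    then show thesis
      using that[OF Max, of R "R / 2"] gam R by (simp add: power2_eq_square algebra_simps)
  qed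
  moreover obtain u where "A *v u = lam *\<^sub>R u" "norm u = 1"
    using unit_eigenvector \<open>lam \<in> ?E\<close> by blast
  moreover have "\<gamma> \<ge> 0"
    using gam \<open>Min ?E \<le> Max ?E\<close> by linarith
  ultimately show ?thesis
    using lip_on_self_attention_ge[of A u lam p R q] by (simp add: mult.assoc)
qed

end
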